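(* Let $V$ be a vector configuration with no element equal to the zero vector and with $\mathrm{DD}(V)>0$. Put $r:=\operatorname{rank}(V)$, $\delta:=\deg^*(V)$ and $d:=|V|-r-1$. Then $V$ admits a codegree$^*$ decomposition of length at least \[ r+1-2\,\mathrm{DD}(V)\;=\;2(d+1-2\delta)-r+1\;=\;3d+4-4\delta-|V|. \]
   Context: A vector configuration is a finite family (repetitions allowed) $V$ of vectors in $\mathbb{R}^r$; a subconfiguration is a subfamily, $\operatorname{rank}(V)=\dim\operatorname{lin}(V)$, and all cardinalities count multiplicities. For a nonzero linear functional $f$ on $\mathbb{R}^r$, the oriented linear hyperplane $H=\{f=0\}$ has sides $H^+=\{f>0\}$, $H^-=\{f<0\}$, $\overline{H}^-=\{f\le 0\}$. The dual codegree of a (sub)configuration $W$ is $\operatorname{codeg}^*(W)=\min_H|\overline{H}^-\cap W|$ and its dual degree is $\deg^*(W)=\max_H|H^+\cap W|-\operatorname{rank}(W)$, both over oriented linear hyperplanes $H$. The covector discrepancy is $\mathrm{DD}(W)=\max_f\big|\,|\{w\in W: f(w)>0\}|-|\{w\in W:f(w)<0\}|\,\big|$ over all linear functionals $f$. A codegree$^*$ decomposition of $V$ of length $m$ is a partition $V=V_0\uplus V_1\uplus\dots\uplus V_m$ into subconfigurations ($V_0$ possibly empty) such that $\operatorname{codeg}^*(V)=\sum_{i=1}^m\operatorname{codeg}^*(V_i)$ and $\operatorname{codeg}^*(V_i)\ge1$ for $1\le i\le m$. *)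

theory Defs
  imports "HOL-Analysis.Analysis" "HOL-Library.Multiset"
begin

text \<open>Linear functionals are linear maps real^'n => real; an oriented linear
  hyperplane is given by a nonzero linear functional f, with H^+ = {f > 0},
  H^- = {f < 0}, closed H^- = {f <= 0}.\<close>

type_synonym 'n vconf = "(real^'n) multiset"

definition nonzero_functionals :: "((real^'n) \<Rightarrow> real) set" where
  "nonzero_functionals = {f. linear f \<and> f \<noteq> (\<lambda>_. 0)}"

definition vrank :: "'n::finite vconf \<Rightarrow> nat" where
  "vrank W = dim (span (set_mset W))"

definition npos :: "((real^'n) \<Rightarrow> real) \<Rightarrow> 'n vconf \<Rightarrow> nat" where
  "npos f W = size (filter_mset (\<lambda>w. f w > 0) W)"

definition nneg :: "((real^'n) \<Rightarrow> real) \<Rightarrow> 'n vconf \<Rightarrow> nat" where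
  "nneg f W = size (filter_mset (\<lambda>w. f w < 0) W)"

definition nclosedneg :: "((real^'n) \<Rightarrow> real) \<Rightarrow> 'n vconf \<Rightarrow> nat" where
  "nclosedneg f W = size (filter_mset (\<lambda>w. f w \<le> 0) W)"

definition codeg_star :: "'n::finite vconf \<Rightarrow> nat" where
  "codeg_star W = Min ((\<lambda>f. nclosedneg f W) ` nonzero_functionals)"

definition deg_star :: "'n::finite vconf \<Rightarrow> int" where
  "deg_star W = int (Max ((\<lambda>f. npos f W) ` nonzero_functionals)) - int (vrank W)"

definition DD :: "'n::finite vconf \<Rightarrow> int" where
  "DD W = Max ((\<lambda>f. \<bar>int (npos f W) - int (nneg f W)\<bar>) ` {f. linear f})"

definition codeg_star_decomp :: "'n::finite vconf \<Rightarrow> 'n vconf \<Rightarrow> 'n vconf list \<Rightarrow> bool" where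
  "codeg_star_decomp V V0 Vs \<longleftrightarrow>
     V = V0 + sum_list Vs \<and>
     codeg_star V = sum_list (map codeg_star Vs) \<and>
     (\<forall>W\<in>set Vs. codeg_star W \<ge> 1)"

end

theory Submission
  imports Defs
begin

text \<open>Splitting off antipodal pairs {p, c p} with c < 0 costs nothing: each pair has
  codeg* equal to 1, raises the rank by at most 1 and contributes 0 to every sign sum.
  For the antipodal-free remainder R one shows rank R \<le> 2 DD(R): R is unbalanced, and the
  Sylvester--Gallai theorem (in Kelly's form, applied to the lines through the origin) yields
  a hyperplane with nonzero sign sum whose kernel has rank at least rank R - 2; tilting that
  hyperplane towards a functional attaining DD on the kernel shows that DD drops by at least 1
  on the kernel, so induction on the rank applies. The decomposition consists of R and the
  pairs, with R moved into V0 when codeg*(R) = 0. The two identities follow from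
  DD(V) = 2 max |H^+ \<inter> V| - |V|, obtained by moving hyperplanes off the vectors of V.\<close>

section \<open>Sign sums and generic functionals\<close>

definition sgn_int :: "real \<Rightarrow> int" where
  "sgn_int r = (if r > 0 then 1 else if r < 0 then -1 else 0)"

definition sign_sum :: "('a \<Rightarrow> real) \<Rightarrow> 'a multiset \<Rightarrow> int" where
  "sign_sum f W = (\<Sum>x\<in>#W. sgn_int (f x))"

lemma sgn_int_eq_0_iff [simp]: "sgn_int r = 0 \<longleftrightarrow> r = 0"
  by (simp add: sgn_int_def)

lemma sgn_int_mult: "sgn_int (a * b) = sgn_int a * sgn_int b"
  by (simp add: sgn_int_def zero_less_mult_iff mult_less_0_iff)

lemma sign_sum_empty [simp]: "sign_sum f {#} = 0"
  by (simp add: sign_sum_def)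

lemma sign_sum_add_mset [simp]: "sign_sum f (add_mset x W) = sgn_int (f x) + sign_sum f W"
  by (simp add: sign_sum_def)

lemma sign_sum_union [simp]: "sign_sum f (A + B) = sign_sum f A + sign_sum f B"
  by (simp add: sign_sum_def)

lemma sign_sum_cong:
  "(\<And>x. x \<in># W \<Longrightarrow> sgn_int (f x) = sgn_int (g x)) \<Longrightarrow> sign_sum f W = sign_sum g W"
  by (induction W) auto

lemma sign_sum_uminus: "sign_sum (\<lambda>x. - f x) W = - sign_sum f W"
  by (induction W) (auto simp: sgn_int_def)

lemma sign_sum_eq_npos_minus_nneg: "sign_sum f W = int (npos f W) - int (nneg f W)"
  unfolding npos_def nneg_def by (induction W) (auto simp: sgn_int_def)

lemma abs_sign_sum_le_size: "\<bar>sign_sum f W\<bar> \<le> int (size W)"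
  by (induction W) (auto simp: sgn_int_def)

lemma sign_sum_all_pos: "(\<And>x. x \<in># W \<Longrightarrow> f x > 0) \<Longrightarrow> sign_sum f W = int (size W)"
  by (induction W) (auto simp: sgn_int_def)

lemma sign_sum_all_zero: "(\<And>x. x \<in># W \<Longrightarrow> f x = 0) \<Longrightarrow> sign_sum f W = 0"
  by (induction W) (auto simp: sgn_int_def)

lemma sign_sum_image_mset: "sign_sum f (image_mset g W) = sign_sum (\<lambda>x. f (g x)) W"
  by (induction W) auto

lemma sign_sum_filter_support:
  "(\<And>x. x \<in># W \<Longrightarrow> \<not> P x \<Longrightarrow> f x = 0) \<Longrightarrow> sign_sum f W = sign_sum f (filter_mset P W)"
  by (induction W) auto

lemma sign_sum_nonvanishing:
  assumes "\<And>x. x \<in># W \<Longrightarrow> f x \<noteq> 0"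
  shows "sign_sum f W = 2 * int (npos f W) - int (size W)"
  using assms unfolding npos_def by (induction W) (auto simp: sgn_int_def)

lemma sgn_int_add_small: "\<bar>b\<bar> < \<bar>a\<bar> \<Longrightarrow> sgn_int (a + b) = sgn_int a"
  unfolding sgn_int_def by (cases "a > 0") (simp_all add: abs_if split: if_splits)

lemma sgn_int_small_perturbation:
  fixes h k :: "'a \<Rightarrow> real"
  assumes "finite A"
  shows "\<exists>e>0. \<forall>x\<in>A. sgn_int (h x + e * k x) = (if h x = 0 then sgn_int (k x) else sgn_int (h x))"
proof -
  define B where "B = {x\<in>A. h x \<noteq> 0}"
  define e where "e = Min (insert 1 ((\<lambda>x. \<bar>h x\<bar> / (\<bar>k x\<bar> + 1)) ` B))"
  have "finite B" using assms by (simp add: B_def)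
  then have e_pos: "e > 0" and e_le: "\<And>x. x \<in> B \<Longrightarrow> e \<le> \<bar>h x\<bar> / (\<bar>k x\<bar> + 1)"
    unfolding e_def by (auto simp: B_def)
  have "\<bar>e * k x\<bar> < \<bar>h x\<bar>" if "x \<in> B" for x
  proof -
    have "e * (\<bar>k x\<bar> + 1) \<le> \<bar>h x\<bar>"
      using e_le[OF that] by (simp add: pos_le_divide_eq add_pos_nonneg)
    then show ?thesis using e_pos by (simp add: abs_mult algebra_simps)
  qed
  note small = this
  have "sgn_int (h x + e * k x) = (if h x = 0 then sgn_int (k x) else sgn_int (h x))"
    if "x \<in> A" for x
  proof (cases "h x = 0")
    case True
    moreover have "sgn_int e = 1" using e_pos by (simp add: sgn_int_def)
    ultimately show ?thesis by (simp add: sgn_int_mult)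
  next
    case False
    with that small show ?thesis
      by (simp add: B_def sgn_int_add_small)
  qed
  with e_pos show ?thesis by blast
qed

lemma sign_sum_lexicographic:
  assumes "\<And>x. x \<in># W \<Longrightarrow> sgn_int (g x) = (if h x = 0 then sgn_int (k x) else sgn_int (h x))"
  shows "sign_sum g W = sign_sum h W + sign_sum k (filter_mset (\<lambda>x. h x = 0) W)"
  using assms by (induction W) auto

lemma sign_sum_small_perturbation:
  fixes h k :: "'a \<Rightarrow> real"
  shows "\<exists>e>0. sign_sum (\<lambda>x. h x + e * k x) W = sign_sum h W + sign_sum k (filter_mset (\<lambda>x. h x = 0) W)"
  using sgn_int_small_perturbation[of "set_mset W" h k] sign_sum_lexicographic by fastforce

lemma sign_sum_kernel_eq_0:
  fixes h k :: "'a::real_inner"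
  assumes "\<And>e. sign_sum (\<lambda>x. (h + e *\<^sub>R k) \<bullet> x) W = 0"
  shows "sign_sum (\<lambda>x. k \<bullet> x) (filter_mset (\<lambda>x. h \<bullet> x = 0) W) = 0"
proof -
  let ?K = "filter_mset (\<lambda>x. h \<bullet> x = 0) W"
  obtain e1 where "sign_sum (\<lambda>x. h \<bullet> x + e1 * (k \<bullet> x)) W =
      sign_sum (\<lambda>x. h \<bullet> x) W + sign_sum (\<lambda>x. k \<bullet> x) ?K"
    using sign_sum_small_perturbation[of "\<lambda>x. h \<bullet> x" "\<lambda>x. k \<bullet> x" W] by blast
  moreover obtain e2 where "sign_sum (\<lambda>x. h \<bullet> x + e2 * - (k \<bullet> x)) W =
      sign_sum (\<lambda>x. h \<bullet> x) W + sign_sum (\<lambda>x. - (k \<bullet> x)) ?K"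
    using sign_sum_small_perturbation[of "\<lambda>x. h \<bullet> x" "\<lambda>x. - (k \<bullet> x)" W] by blast
  moreover have "sign_sum (\<lambda>x. h \<bullet> x + e1 * (k \<bullet> x)) W = 0"
    using assms[of e1] by (simp add: inner_add_left)
  moreover have "sign_sum (\<lambda>x. h \<bullet> x + e2 * - (k \<bullet> x)) W = 0"
    using assms[of "- e2"] by (simp add: inner_diff_left)
  ultimately show ?thesis
    using sign_sum_uminus[of "\<lambda>x. k \<bullet> x" ?K] by linarith
qed

lemma linear_inner_right: "linear (\<lambda>x. a \<bullet> x)"
  by (rule bounded_linear.linear[OF bounded_linear_inner_right])

lemma linear_add_scaled:
  fixes f g :: "'a::real_vector \<Rightarrow> real"
  assumes "linear f" "linear g"
  shows "linear (\<lambda>x. f x + e * g x)"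
  using assms by (intro linearI) (simp_all add: linear_add linear_cmul algebra_simps)

lemma orthogonal_witness:
  fixes x :: "'a::euclidean_space"
  assumes "x \<notin> span S"
  obtains z where "\<And>s. s \<in> S \<Longrightarrow> z \<bullet> s = 0" "z \<bullet> x \<noteq> 0"
proof -
  have "span S \<subset> span (insert x S)"
    using assms by (metis insertI1 psubsetI span_base span_mono subset_insertI)
  then obtain z where z: "z \<noteq> 0" "z \<in> span (insert x S)" "\<And>y. y \<in> span S \<Longrightarrow> orthogonal z y"
    using orthogonal_to_subspace_exists_gen by blast
  obtain k where "z - k *\<^sub>R x \<in> span S" using z(2) span_breakdown_eq by blast
  then have "z \<bullet> (z - k *\<^sub>R x) = 0"
    using z(3) by (simp add: orthogonal_def)
  then have "z \<bullet> z = k * (z \<bullet> x)"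
    by (simp add: inner_diff_right)
  with z show ?thesis by (intro that[of z]) (auto simp: span_base orthogonal_def)
qed

lemma inner_span_eq_0:
  fixes h :: "'a::real_inner"
  assumes "x \<in> span S" "\<And>s. s \<in> S \<Longrightarrow> h \<bullet> s = 0"
  shows "h \<bullet> x = 0"
  using orthogonal_to_span[OF assms(1), of h] assms(2) by (simp add: orthogonal_def)

text \<open>Each new vector of X is repaired by a small perturbation h + e t, which keeps the
  previous vectors off the hyperplane.\<close>
lemma generic_orthogonal_vector:
  fixes S X :: "'a::euclidean_space set"
  assumes "finite X"
  obtains h where "\<And>s. s \<in> S \<Longrightarrow> h \<bullet> s = 0" "\<And>x. x \<in> X \<Longrightarrow> x \<notin> span S \<Longrightarrow> h \<bullet> x \<noteq> 0"
proof -
  have "\<exists>h. (\<forall>s\<in>S. h \<bullet> s = 0) \<and> (\<forall>x\<in>X. x \<notin> span S \<longrightarrow> h \<bullet> x \<noteq> 0)"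
    using assms
  proof (induction X rule: finite_induct)
    case empty
    show ?case by (intro exI[of _ 0]) simp
  next
    case (insert x X)
    then obtain h where h: "\<forall>s\<in>S. h \<bullet> s = 0" "\<forall>y\<in>X. y \<notin> span S \<longrightarrow> h \<bullet> y \<noteq> 0"
      by blast
    show ?case
    proof (cases "x \<in> span S \<or> h \<bullet> x \<noteq> 0")
      case True
      with h show ?thesis by auto
    next
      case False
      then obtain t where t: "\<And>s. s \<in> S \<Longrightarrow> t \<bullet> s = 0" "t \<bullet> x \<noteq> 0"
        using orthogonal_witness by blast
      obtain e where e: "\<forall>y\<in>insert x X. sgn_int (h \<bullet> y + e * (t \<bullet> y)) =
          (if h \<bullet> y = 0 then sgn_int (t \<bullet> y) else sgn_int (h \<bullet> y))"
        using sgn_int_small_perturbation[OF insert.hyps(1)[THEN finite.insertI, of x]] by blast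
      have "(h + e *\<^sub>R t) \<bullet> y \<noteq> 0" if "y \<in> insert x X" "y \<notin> span S" for y
      proof -
        have "sgn_int (h \<bullet> y + e * (t \<bullet> y)) = (if h \<bullet> y = 0 then sgn_int (t \<bullet> y) else sgn_int (h \<bullet> y))"
          using e that(1) by blast
        then have "sgn_int ((h + e *\<^sub>R t) \<bullet> y) = (if h \<bullet> y = 0 then sgn_int (t \<bullet> y) else sgn_int (h \<bullet> y))"
          by (simp add: inner_add_left)
        moreover have "h \<bullet> y = 0 \<Longrightarrow> t \<bullet> y \<noteq> 0" using that h(2) t(2) by auto
        ultimately show ?thesis by (metis sgn_int_eq_0_iff)
      qed
      with h(1) t(1) show ?thesis
        by (intro exI[of _ "h + e *\<^sub>R t"]) (simp add: inner_add_left)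
    qed
  qed
  with that show ?thesis by blast
qed

lemma generic_vector:
  fixes X :: "'a::euclidean_space set"
  assumes "finite X" "0 \<notin> X"
  obtains u where "\<And>x. x \<in> X \<Longrightarrow> u \<bullet> x \<noteq> 0"
proof -
  obtain u where u: "\<And>x. x \<in> X \<Longrightarrow> x \<notin> span {} \<Longrightarrow> u \<bullet> x \<noteq> 0"
    using generic_orthogonal_vector[OF assms(1), of "{}"] by blast
  have "u \<bullet> x \<noteq> 0" if "x \<in> X" for x
    using u[OF that] that assms(2) by (auto simp: span_empty)
  then show ?thesis by (rule that)
qed

section \<open>Covector discrepancy, dual degree and dual codegree\<close>

lemma finite_image_size_filter: "finite ((\<lambda>f. size (filter_mset (P f) W)) ` A)"
  by (rule finite_subset[of _ "{0..size W}"]) auto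

lemma finite_image_DD: "finite ((\<lambda>f. \<bar>int (npos f W) - int (nneg f W)\<bar>) ` A)"
  by (rule finite_subset[of _ "{0..int (size W)}"])
    (use abs_sign_sum_le_size in \<open>auto simp: sign_sum_eq_npos_minus_nneg[symmetric]\<close>)

lemma abs_sign_sum_le_DD: "linear f \<Longrightarrow> \<bar>sign_sum f W\<bar> \<le> DD W"
  unfolding DD_def sign_sum_eq_npos_minus_nneg by (rule Max_ge[OF finite_image_DD]) auto

lemma sign_sum_le_DD:
  assumes "linear f" shows "sign_sum f W \<le> DD W"
  using abs_sign_sum_le_DD[OF assms, of W] by linarith

lemma DD_attained: "\<exists>f. linear f \<and> sign_sum f W = DD W"
proof -
  have "(\<lambda>f. \<bar>int (npos f W) - int (nneg f W)\<bar>) ` {f. linear f} \<noteq> {}"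
    using linear_zero by blast
  from Max_in[OF finite_image_DD this]
  obtain f where f: "linear f" "\<bar>sign_sum f W\<bar> = DD W"
    unfolding DD_def sign_sum_eq_npos_minus_nneg by auto
  show ?thesis
  proof (cases "sign_sum f W \<ge> 0")
    case True
    with f show ?thesis by auto
  next
    case False
    with f show ?thesis
      using linear_compose_neg[OF f(1)] sign_sum_uminus[of f W]
      by (intro exI[of _ "\<lambda>x. - f x"]) auto
  qed
qed

lemma DD_empty [simp]: "DD {#} = 0"
  using DD_attained[of "{#}"] by auto

lemma DD_cong: "(\<And>f. linear f \<Longrightarrow> sign_sum f A = sign_sum f B) \<Longrightarrow> DD A = DD B"
  unfolding DD_def sign_sum_eq_npos_minus_nneg[symmetric] by (rule arg_cong[where f=Max]) auto

text \<open>Tilting h by a small multiple of a functional attaining DD on the kernel of h.\<close>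
lemma sign_sum_add_DD_kernel_le_DD:
  assumes "linear h"
  shows "sign_sum h V + DD (filter_mset (\<lambda>x. h x = 0) V) \<le> DD V"
proof -
  obtain f where f: "linear f" "sign_sum f (filter_mset (\<lambda>x. h x = 0) V) = DD (filter_mset (\<lambda>x. h x = 0) V)"
    using DD_attained by blast
  obtain e where "sign_sum (\<lambda>x. h x + e * f x) V = sign_sum h V + sign_sum f (filter_mset (\<lambda>x. h x = 0) V)"
    using sign_sum_small_perturbation by blast
  moreover have "sign_sum (\<lambda>x. h x + e * f x) V \<le> DD V"
    by (rule sign_sum_le_DD[OF linear_add_scaled[OF assms f(1)]])
  ultimately show ?thesis using f(2) by simp
qed

lemma inner_mem_nonzero_functionals: "(a::real^'n) \<noteq> 0 \<Longrightarrow> (\<lambda>x. a \<bullet> x) \<in> nonzero_functionals"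
  unfolding nonzero_functionals_def using linear_inner_right by (auto dest: fun_cong[where x=a])

lemma mem_nonzero_functionalsI: "linear g \<Longrightarrow> g x \<noteq> 0 \<Longrightarrow> g \<in> nonzero_functionals"
  unfolding nonzero_functionals_def by auto

lemma nonzero_functionals_nonempty: "(nonzero_functionals :: ((real^'n) \<Rightarrow> real) set) \<noteq> {}"
  using inner_mem_nonzero_functionals[of "1 :: real^'n"] by auto

lemma codeg_star_le: "f \<in> nonzero_functionals \<Longrightarrow> codeg_star W \<le> nclosedneg f W"
  unfolding codeg_star_def nclosedneg_def by (rule Min_le[OF finite_image_size_filter]) auto

lemma codeg_star_attained: "\<exists>f\<in>nonzero_functionals. codeg_star W = nclosedneg f W"
  using Min_in[OF finite_image_size_filter, of "\<lambda>f w. f w \<le> 0" W nonzero_functionals]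
    nonzero_functionals_nonempty
  unfolding codeg_star_def nclosedneg_def by auto

lemma nclosedneg_union [simp]: "nclosedneg f (A + B) = nclosedneg f A + nclosedneg f B"
  by (simp add: nclosedneg_def)

lemma codeg_star_superadditive: "codeg_star A + codeg_star B \<le> codeg_star (A + B)"
proof -
  obtain f where "f \<in> nonzero_functionals" "codeg_star (A + B) = nclosedneg f (A + B)"
    using codeg_star_attained by blast
  then show ?thesis using codeg_star_le[of f A] codeg_star_le[of f B] by simp
qed

definition max_npos :: "'n::finite vconf \<Rightarrow> nat" where
  "max_npos W = Max ((\<lambda>f. npos f W) ` nonzero_functionals)"

lemma deg_star_eq: "deg_star W = int (max_npos W) - int (vrank W)"
  by (simp add: deg_star_def max_npos_def)

lemma npos_le_max_npos: "f \<in> nonzero_functionals \<Longrightarrow> npos f W \<le> max_npos W"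
  unfolding max_npos_def npos_def by (rule Max_ge[OF finite_image_size_filter]) auto

lemma max_npos_attained: "\<exists>f\<in>nonzero_functionals. max_npos W = npos f W"
  using Max_in[OF finite_image_size_filter, of "\<lambda>f w. f w > 0" W nonzero_functionals]
    nonzero_functionals_nonempty
  unfolding max_npos_def npos_def by auto

text \<open>Moving the hyperplane of f slightly so that it avoids V; the kernel vectors of f are sent
  to the side that does not decrease the sign sum.\<close>
lemma generic_refinement:
  fixes f :: "real^'n \<Rightarrow> real" and V :: "'n::finite vconf"
  assumes "linear f" "0 \<notin># V"
  obtains g where "linear g" "\<And>x. x \<in># V \<Longrightarrow> g x \<noteq> 0" "\<And>x. x \<in># V \<Longrightarrow> f x > 0 \<Longrightarrow> g x > 0"
    "sign_sum f V \<le> sign_sum g V"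
proof -
  obtain u0 where u0: "\<And>x. x \<in># V \<Longrightarrow> u0 \<bullet> x \<noteq> 0"
    using generic_vector[of "set_mset V"] assms(2) by auto
  let ?K = "filter_mset (\<lambda>x. f x = 0) V"
  define u where "u = (if sign_sum (\<lambda>x. u0 \<bullet> x) ?K \<ge> 0 then u0 else - u0)"
  have u: "\<And>x. x \<in># V \<Longrightarrow> u \<bullet> x \<noteq> 0" using u0 by (simp add: u_def)
  have u_nonneg: "sign_sum (\<lambda>x. u \<bullet> x) ?K \<ge> 0"
    using sign_sum_uminus[of "\<lambda>x. u0 \<bullet> x" ?K] by (auto simp: u_def)
  obtain e where e: "\<forall>x\<in>set_mset V. sgn_int (f x + e * (u \<bullet> x)) = (if f x = 0 then sgn_int (u \<bullet> x) else sgn_int (f x))"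
    using sgn_int_small_perturbation[of "set_mset V" f "\<lambda>x. u \<bullet> x"] by auto
  define g where "g x = f x + e * (u \<bullet> x)" for x
  have sgn_g: "sgn_int (g x) = (if f x = 0 then sgn_int (u \<bullet> x) else sgn_int (f x))" if "x \<in># V" for x
    using e that by (simp add: g_def)
  show ?thesis
  proof
    show "linear g" unfolding g_def by (rule linear_add_scaled[OF assms(1) linear_inner_right])
    show "g x \<noteq> 0" if "x \<in># V" for x
      using sgn_g[OF that] u[OF that] by (metis sgn_int_eq_0_iff)
    show "g x > 0" if "x \<in># V" "f x > 0" for x
      using sgn_g[OF that(1)] that(2) by (simp add: sgn_int_def split: if_splits)
    show "sign_sum f V \<le> sign_sum g V"
      using sign_sum_lexicographic[of V g f "\<lambda>x. u \<bullet> x", OF sgn_g] u_nonneg by simp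
  qed
qed

lemma DD_eq_max_npos:
  fixes V :: "'n::finite vconf"
  assumes "0 \<notin># V" "V \<noteq> {#}"
  shows "DD V = 2 * int (max_npos V) - int (size V)"
proof -
  obtain x0 where x0: "x0 \<in># V" using assms(2) by (meson multiset_nonemptyE)
  have upper: "sign_sum f V \<le> 2 * int (max_npos V) - int (size V)" if f: "linear f" for f
  proof -
    obtain g where g: "linear g" "\<And>x. x \<in># V \<Longrightarrow> g x \<noteq> 0" "sign_sum f V \<le> sign_sum g V"
      using generic_refinement[OF f assms(1)] by metis
    have "npos g V \<le> max_npos V"
      using npos_le_max_npos mem_nonzero_functionalsI[OF g(1) g(2)[OF x0]] by blast
    with g show ?thesis using sign_sum_nonvanishing[of V g] by simp
  qed
  have "DD V \<le> 2 * int (max_npos V) - int (size V)"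
    using DD_attained upper by metis
  moreover have "2 * int (max_npos V) - int (size V) \<le> DD V"
  proof -
    obtain f where f: "f \<in> nonzero_functionals" "max_npos V = npos f V"
      using max_npos_attained by blast
    have "linear f" using f(1) by (simp add: nonzero_functionals_def)
    then obtain g :: "real^'n \<Rightarrow> real" where g: "linear g" "\<And>x. x \<in># V \<Longrightarrow> g x \<noteq> 0" "\<And>x. x \<in># V \<Longrightarrow> f x > 0 \<Longrightarrow> g x > 0"
      using generic_refinement[of f V] assms(1) by metis
    have "npos f V \<le> npos g V"
      unfolding npos_def by (intro size_mset_mono filter_mset_mono_strong) (use g(3) in auto)
    then have "2 * int (max_npos V) - int (size V) \<le> sign_sum g V"
      using sign_sum_nonvanishing[of V g] g(2) f(2) by simp
    also have "\<dots> \<le> DD V" by (rule sign_sum_le_DD[OF g(1)])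
    finally show ?thesis .
  qed
  ultimately show ?thesis by linarith
qed

section \<open>The Sylvester--Gallai theorem\<close>

definition line_coord :: "'a::real_inner \<Rightarrow> 'a \<Rightarrow> 'a \<Rightarrow> real" where
  "line_coord p a b = ((p - a) \<bullet> (b - a)) / ((b - a) \<bullet> (b - a))"

definition line_dist2 :: "'a::real_inner \<Rightarrow> 'a \<Rightarrow> 'a \<Rightarrow> real" where
  "line_dist2 p a b = (p - a - line_coord p a b *\<^sub>R (b - a)) \<bullet> (p - a - line_coord p a b *\<^sub>R (b - a))"

lemma line_dist2_nonneg: "line_dist2 p a b \<ge> 0"
  unfolding line_dist2_def by simp

lemma line_residual_orthogonal:
  assumes "a \<noteq> b" shows "(p - a - line_coord p a b *\<^sub>R (b - a)) \<bullet> (b - a) = 0"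
proof -
  have "(b - a) \<bullet> (b - a) \<noteq> 0" using assms by simp
  then show ?thesis unfolding line_coord_def by (simp add: inner_diff_left)
qed

lemma line_coord_on_line:
  assumes "a \<noteq> b" shows "line_coord (a + t *\<^sub>R (b - a)) a b = t"
proof -
  have "(b - a) \<bullet> (b - a) \<noteq> 0" using assms by simp
  then show ?thesis unfolding line_coord_def by simp
qed

lemma line_dist2_on_line: assumes "a \<noteq> b" shows "line_dist2 (a + t *\<^sub>R (b - a)) a b = 0"
  unfolding line_dist2_def line_coord_on_line[OF assms] by simp

lemma on_line_if_line_dist2_eq_0: assumes "line_dist2 p a b = 0" shows "p = a + line_coord p a b *\<^sub>R (b - a)"
proof -
  have "p - a - line_coord p a b *\<^sub>R (b - a) = 0" using assms unfolding line_dist2_def by simp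
  then show ?thesis by (simp add: algebra_simps)
qed

lemma line_dist2_eq:
  assumes "a \<noteq> b"
  shows "line_dist2 p a b = (p - a) \<bullet> (p - a) - ((p - a) \<bullet> (b - a))^2 / ((b - a) \<bullet> (b - a))"
proof -
  define v where "v = p - a"
  define w where "w = b - a"
  have w0: "w \<bullet> w \<noteq> 0" using assms by (simp add: w_def)
  have "line_dist2 p a b = (v - (v \<bullet> w / (w \<bullet> w)) *\<^sub>R w) \<bullet> (v - (v \<bullet> w / (w \<bullet> w)) *\<^sub>R w)"
    unfolding line_dist2_def line_coord_def v_def w_def by simp
  also have "\<dots> = v \<bullet> v - 2 * (v \<bullet> w / (w \<bullet> w)) * (v \<bullet> w) + (v \<bullet> w / (w \<bullet> w))^2 * (w \<bullet> w)"
    by (simp add: inner_diff_left inner_diff_right inner_commute power2_eq_square algebra_simps)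
  also have "\<dots> = v \<bullet> v - (v \<bullet> w)^2 / (w \<bullet> w)"
    using w0 by (simp add: power2_eq_square field_simps)
  finally show ?thesis by (simp add: v_def w_def)
qed

text \<open>With n = u \<bullet> u and D = h \<bullet> h, the expression below is the squared distance from
  q + s' u to the line through q + h and q + s u, where h \<bullet> u = 0.\<close>
lemma kelly_inequality:
  fixes n D s s' :: real
  assumes "n > 0" "D > 0" "s * s' \<ge> 0" "\<bar>s'\<bar> \<le> \<bar>s\<bar>" "s \<noteq> s'"
  shows "0 < (s'^2 * n + D) - (s * s' * n + D)^2 / (s^2 * n + D)"
    and "(s'^2 * n + D) - (s * s' * n + D)^2 / (s^2 * n + D) < D"
proof -
  define B where "B = s^2 * n + D"
  have B: "B > 0" unfolding B_def using assms(1,2) by (simp add: add_nonneg_pos)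
  have id: "(s'^2 * n + D) * B - (s * s' * n + D)^2 = n * D * (s - s')^2"
    unfolding B_def by (simp add: power2_eq_square algebra_simps)
  have eq: "(s'^2 * n + D) - (s * s' * n + D)^2 / B = n * D * (s - s')^2 / B"
    using B id by (simp add: field_simps)
  have pos: "n * D * (s - s')^2 > 0" using assms(1,2,5) by simp
  show "0 < (s'^2 * n + D) - (s * s' * n + D)^2 / (s^2 * n + D)"
    using eq pos B unfolding B_def by simp
  have "s'^2 \<le> s * s'"
  proof -
    have "s'^2 = \<bar>s'\<bar> * \<bar>s'\<bar>" by (simp add: power2_eq_square abs_mult_self_eq)
    also have "\<dots> \<le> \<bar>s\<bar> * \<bar>s'\<bar>" by (rule mult_right_mono[OF assms(4) abs_ge_zero])
    also have "\<dots> = s * s'" using assms(3) by (simp add: abs_mult[symmetric])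
    finally show ?thesis .
  qed
  moreover have "(s - s')^2 = s^2 - 2 * (s * s') + s'^2" by (simp add: power2_eq_square algebra_simps)
  ultimately have "(s - s')^2 \<le> s^2" using assms(3) by linarith
  then have "n * (s - s')^2 \<le> n * s^2" using assms(1) by simp
  then have "n * (s - s')^2 < B" unfolding B_def using assms(2) by (simp add: algebra_simps)
  then have "n * D * (s - s')^2 < D * B" using assms(2) by (simp add: algebra_simps)
  then have "n * D * (s - s')^2 / B < D" using B by (simp add: divide_less_eq)
  then show "(s'^2 * n + D) - (s * s' * n + D)^2 / (s^2 * n + D) < D" using eq unfolding B_def by simp
qed

lemma line_dist2_decreases:
  fixes u h q :: "'a::real_inner"
  assumes "u \<noteq> 0" "h \<bullet> u = 0" "h \<bullet> h > 0" "s \<noteq> s'" "s * s' \<ge> 0" "\<bar>s'\<bar> \<le> \<bar>s\<bar>"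
  shows "0 < line_dist2 (q + s' *\<^sub>R u) (q + h) (q + s *\<^sub>R u)" "line_dist2 (q + s' *\<^sub>R u) (q + h) (q + s *\<^sub>R u) < h \<bullet> h"
proof -
  define n where "n = u \<bullet> u"
  define D where "D = h \<bullet> h"
  have n: "n > 0" using assms(1) by (simp add: n_def)
  have uh: "u \<bullet> h = 0" using assms(2) by (simp add: inner_commute)
  have ne: "q + h \<noteq> q + s *\<^sub>R u"
  proof
    assume "q + h = q + s *\<^sub>R u"
    then have "h = s *\<^sub>R u" by simp
    then have "h \<bullet> h = s * (h \<bullet> u)" by simp
    then show False using assms(2,3) by simp
  qed
  have v: "(q + s' *\<^sub>R u - (q + h)) \<bullet> (q + s' *\<^sub>R u - (q + h)) = s'^2 * n + D"
    by (simp add: n_def D_def inner_diff_left inner_diff_right uh assms(2) power2_eq_square algebra_simps)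
  have vw: "(q + s' *\<^sub>R u - (q + h)) \<bullet> (q + s *\<^sub>R u - (q + h)) = s * s' * n + D"
    by (simp add: n_def D_def inner_diff_left inner_diff_right uh assms(2) algebra_simps)
  have w: "(q + s *\<^sub>R u - (q + h)) \<bullet> (q + s *\<^sub>R u - (q + h)) = s^2 * n + D"
    by (simp add: n_def D_def inner_diff_left inner_diff_right uh assms(2) power2_eq_square algebra_simps)
  have F: "line_dist2 (q + s' *\<^sub>R u) (q + h) (q + s *\<^sub>R u) = (s'^2 * n + D) - (s * s' * n + D)^2 / (s^2 * n + D)"
    using line_dist2_eq[OF ne, of "q + s' *\<^sub>R u"] v vw w by simp
  show "0 < line_dist2 (q + s' *\<^sub>R u) (q + h) (q + s *\<^sub>R u)"
    using kelly_inequality(1)[OF n _ assms(5,6,4)] assms(3) F by (simp add: D_def)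
  show "line_dist2 (q + s' *\<^sub>R u) (q + h) (q + s *\<^sub>R u) < h \<bullet> h"
    using kelly_inequality(2)[OF n _ assms(5,6,4)] assms(3) F by (simp add: D_def)
qed

lemma same_side_pair:
  fixes a b t :: real
  assumes "a \<noteq> b" "(a \<ge> t) = (b \<ge> t)"
  obtains i j where "i \<in> {a, b}" "j \<in> {a, b}" "i \<noteq> j" "(i - t) * (j - t) \<ge> 0" "\<bar>i - t\<bar> \<le> \<bar>j - t\<bar>"
proof -
  have prod: "(a - t) * (b - t) \<ge> 0" using assms(2)
    by (cases "a \<ge> t") (auto simp: zero_le_mult_iff)
  show ?thesis
  proof (cases "\<bar>a - t\<bar> \<le> \<bar>b - t\<bar>")
    case True
    show ?thesis by (rule that[of a b]) (use assms(1) prod True in simp_all)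
  next
    case False
    have "(b - t) * (a - t) \<ge> 0" using prod by (simp add: mult.commute)
    then show ?thesis by (intro that[of b a]) (use assms(1) False in simp_all)
  qed
qed

lemma same_side_pair_of_three:
  fixes r1 r2 r3 t :: real
  assumes "r1 \<noteq> r2" "r1 \<noteq> r3" "r2 \<noteq> r3"
  obtains i j where "i \<in> {r1, r2, r3}" "j \<in> {r1, r2, r3}" "i \<noteq> j" "(i - t) * (j - t) \<ge> 0" "\<bar>i - t\<bar> \<le> \<bar>j - t\<bar>"
proof -
  have "(r1 \<ge> t) = (r2 \<ge> t) \<or> (r1 \<ge> t) = (r3 \<ge> t) \<or> (r2 \<ge> t) = (r3 \<ge> t)"
    by (cases "r1 \<ge> t"; cases "r2 \<ge> t"; cases "r3 \<ge> t") simp_all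
  then show ?thesis
  proof (elim disjE)
    assume "(r1 \<ge> t) = (r2 \<ge> t)"
    then obtain i j where "i \<in> {r1, r2}" "j \<in> {r1, r2}" "i \<noteq> j" "(i - t) * (j - t) \<ge> 0" "\<bar>i - t\<bar> \<le> \<bar>j - t\<bar>"
      using same_side_pair[OF assms(1)] by metis
    then show ?thesis using that[of i j] by auto
  next
    assume "(r1 \<ge> t) = (r3 \<ge> t)"
    then obtain i j where "i \<in> {r1, r3}" "j \<in> {r1, r3}" "i \<noteq> j" "(i - t) * (j - t) \<ge> 0" "\<bar>i - t\<bar> \<le> \<bar>j - t\<bar>"
      using same_side_pair[OF assms(2)] by metis
    then show ?thesis using that[of i j] by auto
  next
    assume "(r2 \<ge> t) = (r3 \<ge> t)"
    then obtain i j where "i \<in> {r2, r3}" "j \<in> {r2, r3}" "i \<noteq> j" "(i - t) * (j - t) \<ge> 0" "\<bar>i - t\<bar> \<le> \<bar>j - t\<bar>"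
      using same_side_pair[OF assms(3)] by metis
    then show ?thesis using that[of i j] by auto
  qed
qed

text \<open>Among a, b, x two lie on the same side of the foot of the perpendicular from p; the
  nearer one is closer to the line through p and the farther one than p is to the line ab.\<close>
lemma kelly_smaller_triple:
  fixes p a b x :: "'a::real_inner"
  assumes ab: "a \<noteq> b" and p: "line_dist2 p a b > 0"
    and x: "line_dist2 x a b = 0" "x \<noteq> a" "x \<noteq> b"
  obtains y z where "y \<in> {a, b, x}" "z \<in> {a, b, x}" "p \<noteq> z"
    "0 < line_dist2 y p z" "line_dist2 y p z < line_dist2 p a b"
proof -
  define u where "u = b - a"
  define t0 where "t0 = line_coord p a b"
  define q where "q = a + t0 *\<^sub>R u"
  define h where "h = p - q"
  have u0: "u \<noteq> 0" using ab by (simp add: u_def)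
  have h_eq: "h = p - a - line_coord p a b *\<^sub>R (b - a)" by (simp add: h_def q_def t0_def u_def)
  have hu: "h \<bullet> u = 0" using line_residual_orthogonal[OF ab, of p] h_eq by (simp add: u_def)
  have hh: "h \<bullet> h = line_dist2 p a b" by (simp add: line_dist2_def h_eq)
  define tx where "tx = line_coord x a b"
  have x_eq: "x = a + tx *\<^sub>R u" using on_line_if_line_dist2_eq_0[OF x(1)] by (simp add: tx_def u_def)
  have "0 \<noteq> tx" "1 \<noteq> tx" using x(2,3) x_eq by (auto simp: u_def)
  then obtain i j where ij: "i \<in> {0, 1, tx}" "j \<in> {0, 1, tx}" "i \<noteq> j"
    "(i - t0) * (j - t0) \<ge> 0" "\<bar>i - t0\<bar> \<le> \<bar>j - t0\<bar>"
    by (rule same_side_pair_of_three[OF zero_neq_one])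
  have on_line: "a + k *\<^sub>R u \<in> {a, b, x}" if "k \<in> {0, 1, tx}" for k
    using that x_eq by (auto simp: u_def)
  have shift: "a + k *\<^sub>R u = q + (k - t0) *\<^sub>R u" for k by (simp add: q_def algebra_simps)
  have "h \<bullet> h > 0" "j - t0 \<noteq> i - t0" "(j - t0) * (i - t0) \<ge> 0"
    using hh p ij(3,4) by (simp_all add: mult.commute)
  note dec = line_dist2_decreases[OF u0 hu this ij(5), of q]
  have p_eq: "p = q + h" by (simp add: h_def)
  have "p \<noteq> a + j *\<^sub>R u"
    using line_dist2_on_line[OF ab, of j] p by (auto simp: u_def)
  with on_line[OF ij(1)] on_line[OF ij(2)] dec hh show ?thesis
    by (intro that) (auto simp: shift p_eq)
qed

lemma sylvester_gallai:
  fixes D :: "'a::real_inner set"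
  assumes fin: "finite D" and ex: "\<exists>p\<in>D. \<exists>a\<in>D. \<exists>b\<in>D. a \<noteq> b \<and> line_dist2 p a b > 0"
  obtains a b where "a \<in> D" "b \<in> D" "a \<noteq> b" "\<And>x. x \<in> D \<Longrightarrow> line_dist2 x a b = 0 \<Longrightarrow> x = a \<or> x = b"
proof -
  define T where "T = {(p, a, b). p \<in> D \<and> a \<in> D \<and> b \<in> D \<and> a \<noteq> b \<and> line_dist2 p a b > 0}"
  define F :: "'a \<times> 'a \<times> 'a \<Rightarrow> real" where "F = (\<lambda>(p, a, b). line_dist2 p a b)"
  have "finite T"
    by (rule finite_subset[of _ "D \<times> D \<times> D"]) (auto simp: T_def fin)
  moreover have "T \<noteq> {}" using ex by (auto simp: T_def)
  ultimately have "arg_min_on F T \<in> T" "\<And>t. t \<in> T \<Longrightarrow> \<not> F t < F (arg_min_on F T)"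
    using arg_min_if_finite[of T F] by blast+
  moreover obtain p a b where "arg_min_on F T = (p, a, b)" using prod_cases3 by blast
  ultimately have m: "(p, a, b) \<in> T" and min: "\<And>t. t \<in> T \<Longrightarrow> \<not> F t < F (p, a, b)"
    by auto
  from m have D: "p \<in> D" "a \<in> D" "b \<in> D" and ab: "a \<noteq> b" and p: "line_dist2 p a b > 0"
    by (auto simp: T_def)
  have "x = a \<or> x = b" if x: "x \<in> D" "line_dist2 x a b = 0" for x
  proof (rule ccontr)
    assume "\<not> (x = a \<or> x = b)"
    then have "x \<noteq> a" "x \<noteq> b" by auto
    then obtain y z where yz: "y \<in> {a, b, x}" "z \<in> {a, b, x}" "p \<noteq> z"
        "0 < line_dist2 y p z" "line_dist2 y p z < line_dist2 p a b"
      by (rule kelly_smaller_triple[OF ab p x(2)])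
    have "y \<in> D" "z \<in> D" using yz(1,2) D x(1) by auto
    with yz(3,4) D(1) have "(y, p, z) \<in> T" by (simp add: T_def)
    from min[OF this] yz(5) show False by (simp add: F_def)
  qed
  with D ab show ?thesis by (intro that) auto
qed

definition chart :: "'a::real_inner \<Rightarrow> 'a \<Rightarrow> 'a" where
  "chart u x = (1 / (u \<bullet> x)) *\<^sub>R x"

lemma inner_chart: "u \<bullet> x \<noteq> 0 \<Longrightarrow> u \<bullet> chart u x = 1"
  by (simp add: chart_def)

lemma scaleR_chart: "u \<bullet> x \<noteq> 0 \<Longrightarrow> (u \<bullet> x) *\<^sub>R chart u x = x"
  by (simp add: chart_def)

lemma chart_eq_iff_parallel:
  assumes "u \<bullet> x \<noteq> 0" "u \<bullet> y \<noteq> 0"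
  shows "chart u x = chart u y \<longleftrightarrow> (\<exists>c. x = c *\<^sub>R y)"
proof
  assume "chart u x = chart u y"
  then have "x = ((u \<bullet> x) / (u \<bullet> y)) *\<^sub>R y"
    using scaleR_chart[OF assms(1)] assms(2) by (simp add: chart_def)
  then show "\<exists>c. x = c *\<^sub>R y" by blast
next
  assume "\<exists>c. x = c *\<^sub>R y"
  then obtain c where "x = c *\<^sub>R y" by blast
  with assms show "chart u x = chart u y" by (simp add: chart_def)
qed

lemma chart_on_line:
  fixes u a b x :: "'a::real_inner"
  assumes "u \<bullet> a \<noteq> 0" "u \<bullet> b \<noteq> 0" "u \<bullet> x \<noteq> 0" "chart u a \<noteq> chart u b"
    and "x = k1 *\<^sub>R a + k2 *\<^sub>R b"
  shows "line_dist2 (chart u x) (chart u a) (chart u b) = 0"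
proof -
  define \<alpha> where "\<alpha> = k1 * (u \<bullet> a) / (u \<bullet> x)"
  define \<beta> where "\<beta> = k2 * (u \<bullet> b) / (u \<bullet> x)"
  have comb: "chart u x = \<alpha> *\<^sub>R chart u a + \<beta> *\<^sub>R chart u b"
    using assms(1-3) by (simp add: chart_def assms(5) \<alpha>_def \<beta>_def scaleR_add_right)
  then have "u \<bullet> chart u x = \<alpha> * (u \<bullet> chart u a) + \<beta> * (u \<bullet> chart u b)"
    by (simp add: inner_add_right)
  then have "\<alpha> = 1 - \<beta>" using assms(1-3) by (simp add: inner_chart)
  with comb have "chart u x = chart u a + \<beta> *\<^sub>R (chart u b - chart u a)"
    by (simp add: scaleR_diff_left scaleR_diff_right)
  then show ?thesis using line_dist2_on_line[OF assms(4)] by simp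
qed

lemma span_pair_repr:
  assumes "x \<in> span {a, b}"
  obtains k1 k2 where "x = k1 *\<^sub>R a + k2 *\<^sub>R b"
proof -
  obtain k where "x - k *\<^sub>R a \<in> span {b}" using assms span_breakdown_eq by blast
  then obtain k2 where "x - k *\<^sub>R a = k2 *\<^sub>R b" using span_singleton by auto
  then show ?thesis by (intro that[of k k2]) (simp add: algebra_simps)
qed

lemma collinear_imp_subset_span_pair:
  fixes D :: "'a::real_inner set"
  assumes "\<And>p a b. p \<in> D \<Longrightarrow> a \<in> D \<Longrightarrow> b \<in> D \<Longrightarrow> a \<noteq> b \<Longrightarrow> line_dist2 p a b = 0"
  obtains a b where "D \<subseteq> span {a, b}"
proof (cases "\<exists>a\<in>D. \<exists>b\<in>D. a \<noteq> b")
  case True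
  then obtain a b where ab: "a \<in> D" "b \<in> D" "a \<noteq> b" by blast
  have "p \<in> span {a, b}" if "p \<in> D" for p
  proof -
    have "p = a + line_coord p a b *\<^sub>R (b - a)"
      using on_line_if_line_dist2_eq_0 assms[OF that ab] .
    also have "\<dots> \<in> span {a, b}" by (intro span_add span_scale span_diff span_base) auto
    finally show ?thesis .
  qed
  then show ?thesis by (intro that[of a b]) auto
next
  case False
  then have "D \<subseteq> span {a, a}" if "a \<in> D" for a using that by (auto intro: span_base)
  then show ?thesis using that by blast
qed

lemma dim_le_2_if_subset_span_pair:
  assumes "X \<subseteq> span {a, b}" shows "dim X \<le> 2"
proof -
  have "dim X \<le> card {a, b}" by (rule dim_le_card[OF assms]) simp
  also have "\<dots> \<le> 2" by (simp add: card_insert_le_m1)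
  finally show ?thesis .
qed

lemma chart_image_not_collinear:
  fixes X :: "'a::euclidean_space set"
  assumes dim: "dim X \<ge> 3" and u: "\<And>x. x \<in> X \<Longrightarrow> u \<bullet> x \<noteq> 0"
  shows "\<exists>p\<in>chart u ` X. \<exists>a\<in>chart u ` X. \<exists>b\<in>chart u ` X. a \<noteq> b \<and> line_dist2 p a b > 0"
proof (rule ccontr)
  let ?D = "chart u ` X"
  assume "\<not> ?thesis"
  then have "line_dist2 p a b = 0" if "p \<in> ?D" "a \<in> ?D" "b \<in> ?D" "a \<noteq> b" for p a b
    using that line_dist2_nonneg[of p a b] by force
  then obtain a b where "?D \<subseteq> span {a, b}"
    by (rule collinear_imp_subset_span_pair)
  then have span_D: "span ?D \<subseteq> span {a, b}" by (simp add: span_minimal)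
  have "x \<in> span ?D" if "x \<in> X" for x
  proof -
    have "chart u x \<in> span ?D" using that by (auto intro: span_base)
    then have "(u \<bullet> x) *\<^sub>R chart u x \<in> span ?D" by (rule span_scale)
    then show ?thesis using scaleR_chart[OF u[OF that]] by simp
  qed
  with span_D have "X \<subseteq> span {a, b}" by blast
  with dim show False using dim_le_2_if_subset_span_pair[of X a b] by simp
qed

text \<open>Vector form of the Sylvester--Gallai theorem: through the chart u x = 1 the lines through
  the origin become points and the planes through the origin become lines.\<close>
lemma sylvester_gallai_vectors:
  fixes X :: "'a::euclidean_space set"
  assumes fin: "finite X" and X0: "0 \<notin> X" and dim: "dim X \<ge> 3"
  obtains a b where "a \<in> X" "b \<in> X" "\<And>c. b \<noteq> c *\<^sub>R a"
    "\<And>x. x \<in> X \<Longrightarrow> x \<in> span {a, b} \<Longrightarrow> (\<exists>c. x = c *\<^sub>R a) \<or> (\<exists>c. x = c *\<^sub>R b)"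
proof -
  obtain u where u: "\<And>x. x \<in> X \<Longrightarrow> u \<bullet> x \<noteq> 0" using generic_vector[OF fin X0] by blast
  define D where "D = chart u ` X"
  have "\<exists>p\<in>D. \<exists>a\<in>D. \<exists>b\<in>D. a \<noteq> b \<and> line_dist2 p a b > 0"
    unfolding D_def by (rule chart_image_not_collinear[OF dim u])
  moreover have "finite D" using fin by (simp add: D_def)
  ultimately obtain a' b' where ab': "a' \<in> D" "b' \<in> D" "a' \<noteq> b'"
      "\<And>x. x \<in> D \<Longrightarrow> line_dist2 x a' b' = 0 \<Longrightarrow> x = a' \<or> x = b'"
    using sylvester_gallai by metis
  obtain a b where a: "a \<in> X" "a' = chart u a" and b: "b \<in> X" "b' = chart u b"
    using ab'(1,2) unfolding D_def by blast
  show ?thesis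
  proof (rule that[OF a(1) b(1)])
    show "b \<noteq> c *\<^sub>R a" for c
      using chart_eq_iff_parallel[OF u[OF b(1)] u[OF a(1)]] ab'(3) a b by auto
    show "(\<exists>c. x = c *\<^sub>R a) \<or> (\<exists>c. x = c *\<^sub>R b)" if x: "x \<in> X" "x \<in> span {a, b}" for x
    proof -
      obtain k1 k2 where "x = k1 *\<^sub>R a + k2 *\<^sub>R b" using span_pair_repr[OF x(2)] .
      then have "line_dist2 (chart u x) a' b' = 0"
        using chart_on_line[OF u[OF a(1)] u[OF b(1)] u[OF x(1)]] ab'(3) a b by simp
      then have "chart u x = chart u a \<or> chart u x = chart u b"
        using ab'(4)[of "chart u x"] x(1) a b by (simp add: D_def)
      then show ?thesis
        using chart_eq_iff_parallel[OF u[OF x(1)] u[OF a(1)]] chart_eq_iff_parallel[OF u[OF x(1)] u[OF b(1)]]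
        by blast
    qed
  qed
qed

section \<open>Hyperplanes with nonzero sign sum\<close>

definition unbalanced :: "'a::real_inner multiset \<Rightarrow> bool" where
  "unbalanced W \<longleftrightarrow> (\<exists>\<phi>. sign_sum (\<lambda>x. \<phi> \<bullet> x) W \<noteq> 0)"

definition nonzero_multiple :: "'a::real_vector \<Rightarrow> 'a \<Rightarrow> bool" where
  "nonzero_multiple u x \<longleftrightarrow> x \<noteq> 0 \<and> (\<exists>c. x = c *\<^sub>R u)"

definition line_imbalance :: "'a::real_vector \<Rightarrow> 'a multiset \<Rightarrow> int" where
  "line_imbalance u W = int (size (filter_mset (\<lambda>x. \<exists>c>0. x = c *\<^sub>R u) W))
     - int (size (filter_mset (\<lambda>x. \<exists>c<0. x = c *\<^sub>R u) W))"

lemma sign_sum_nonzero_multiples: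
  fixes u \<phi> :: "'a::real_inner"
  assumes "u \<noteq> 0"
  shows "sign_sum (\<lambda>x. \<phi> \<bullet> x) (filter_mset (nonzero_multiple u) W) = sgn_int (\<phi> \<bullet> u) * line_imbalance u W"
proof (induction W)
  case empty
  show ?case by (simp add: line_imbalance_def)
next
  case (add x W)
  show ?case
  proof (cases "\<exists>c. x = c *\<^sub>R u")
    case True
    then obtain c where x: "x = c *\<^sub>R u" by blast
    have pos: "(\<exists>d>0. x = d *\<^sub>R u) \<longleftrightarrow> c > 0" and neg: "(\<exists>d<0. x = d *\<^sub>R u) \<longleftrightarrow> c < 0"
      using assms by (auto simp: x scaleR_cancel_right)
    have "sgn_int (\<phi> \<bullet> x) = sgn_int c * sgn_int (\<phi> \<bullet> u)" by (simp add: x sgn_int_mult)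
    with add.IH pos neg show ?thesis
      using assms by (auto simp: line_imbalance_def nonzero_multiple_def x sgn_int_def algebra_simps)
  next
    case False
    then have "filter_mset (nonzero_multiple u) (add_mset x W) = filter_mset (nonzero_multiple u) W"
      "filter_mset (\<lambda>x. \<exists>d>0. x = d *\<^sub>R u) (add_mset x W) = filter_mset (\<lambda>x. \<exists>d>0. x = d *\<^sub>R u) W"
      "filter_mset (\<lambda>x. \<exists>d<0. x = d *\<^sub>R u) (add_mset x W) = filter_mset (\<lambda>x. \<exists>d<0. x = d *\<^sub>R u) W"
      by (auto simp: nonzero_multiple_def)
    with add.IH show ?thesis by (simp add: line_imbalance_def)
  qed
qed

lemma sign_sum_remove_balanced_line:
  fixes u \<phi> :: "'a::real_inner"
  assumes "u \<noteq> 0" "line_imbalance u W = 0"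
  shows "sign_sum (\<lambda>x. \<phi> \<bullet> x) W = sign_sum (\<lambda>x. \<phi> \<bullet> x) (filter_mset (\<lambda>x. \<not> nonzero_multiple u x) W)"
  using sign_sum_nonzero_multiples[OF assms(1), of \<phi> W] assms(2)
  by (metis add_0 multiset_partition mult_zero_right sign_sum_union)

lemma unbalanced_hyperplane_through_vector:
  fixes u :: "'a::euclidean_space"
  assumes "u \<notin> span (set_mset W)" "unbalanced W"
  obtains \<psi> where "\<psi> \<bullet> u = 0" "sign_sum (\<lambda>x. \<psi> \<bullet> x) W \<noteq> 0"
proof -
  obtain z where z: "\<And>s. s \<in># W \<Longrightarrow> z \<bullet> s = 0" "z \<bullet> u \<noteq> 0"
    using orthogonal_witness[OF assms(1)] by blast
  obtain \<phi> where \<phi>: "sign_sum (\<lambda>x. \<phi> \<bullet> x) W \<noteq> 0" using assms(2) unbalanced_def by blast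
  define \<psi> where "\<psi> = \<phi> - ((\<phi> \<bullet> u) / (z \<bullet> u)) *\<^sub>R z"
  have "\<psi> \<bullet> u = 0" using z(2) by (simp add: \<psi>_def inner_diff_left)
  moreover have "sign_sum (\<lambda>x. \<psi> \<bullet> x) W = sign_sum (\<lambda>x. \<phi> \<bullet> x) W"
    by (rule sign_sum_cong) (simp add: \<psi>_def inner_diff_left z(1))
  ultimately show ?thesis using \<phi> that by simp
qed

text \<open>Let h vanish on W exactly on the plane spanned by a and b, and let k vanish on a but not
  on b. If all hyperplanes through a were balanced, so would be the tilts h \<plusminus> e k, hence k
  would be balanced on the plane, where it sees only the line of b.\<close>
lemma ordinary_line_unbalanced_hyperplane:
  fixes a b :: "'a::euclidean_space"
  assumes b: "b \<notin> span {a}"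
    and ordinary: "\<And>x. x \<in># W \<Longrightarrow> x \<in> span {a, b} \<Longrightarrow> (\<exists>c. x = c *\<^sub>R a) \<or> (\<exists>c. x = c *\<^sub>R b)"
    and imbalance: "line_imbalance b W \<noteq> 0"
  obtains \<psi> where "\<psi> \<bullet> a = 0" "sign_sum (\<lambda>x. \<psi> \<bullet> x) W \<noteq> 0"
proof (rule ccontr)
  assume "\<not> thesis"
  with that have balanced: "\<And>\<psi>. \<psi> \<bullet> a = 0 \<Longrightarrow> sign_sum (\<lambda>x. \<psi> \<bullet> x) W = 0" by blast
  obtain h where h: "\<And>s. s \<in> {a, b} \<Longrightarrow> h \<bullet> s = 0"
      "\<And>x. x \<in> set_mset W \<Longrightarrow> x \<notin> span {a, b} \<Longrightarrow> h \<bullet> x \<noteq> 0"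
    using generic_orthogonal_vector[of "set_mset W" "{a, b}"] by blast
  obtain k where k: "\<And>s. s \<in> {a} \<Longrightarrow> k \<bullet> s = 0" "k \<bullet> b \<noteq> 0"
    using orthogonal_witness[OF b] by blast
  have b0: "b \<noteq> 0" using b span_zero by blast
  let ?K = "filter_mset (\<lambda>x. h \<bullet> x = 0) W"
  have kernel: "h \<bullet> x = 0 \<longleftrightarrow> x \<in> span {a, b}" if "x \<in># W" for x
    using h that inner_span_eq_0[of x "{a, b}" h] by auto
  have "sign_sum (\<lambda>x. k \<bullet> x) ?K = 0"
    by (rule sign_sum_kernel_eq_0, rule balanced) (use h(1) k(1) in \<open>simp add: inner_add_left\<close>)
  moreover have "sign_sum (\<lambda>x. k \<bullet> x) ?K = sign_sum (\<lambda>x. k \<bullet> x) (filter_mset (nonzero_multiple b) ?K)"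
  proof (rule sign_sum_filter_support)
    fix x assume x: "x \<in># ?K" "\<not> nonzero_multiple b x"
    then have "(\<exists>c. x = c *\<^sub>R a) \<or> (\<exists>c. x = c *\<^sub>R b)" using ordinary kernel by auto
    with x(2) have "\<exists>c. x = c *\<^sub>R a" by (auto simp: nonzero_multiple_def intro: exI[of _ 0])
    then show "k \<bullet> x = 0" using k(1) by auto
  qed
  moreover have "filter_mset (nonzero_multiple b) ?K = filter_mset (nonzero_multiple b) W"
  proof -
    have "h \<bullet> x = 0" if "x \<in># W" "nonzero_multiple b x" for x
      using that kernel by (auto simp: nonzero_multiple_def intro: span_scale span_base)
    then show ?thesis by (auto simp: filter_filter_mset intro: filter_mset_cong0)
  qed
  moreover have "sgn_int (k \<bullet> b) * line_imbalance b W \<noteq> 0" using k(2) imbalance by simp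
  ultimately show False
    using sign_sum_nonzero_multiples[OF b0, of k W] by simp
qed

lemma size_filter_not_nonzero_multiple_less:
  assumes "u \<in># W" "u \<noteq> 0"
  shows "size (filter_mset (\<lambda>x. \<not> nonzero_multiple u x) W) < size W"
proof -
  have "nonzero_multiple u u" using assms(2) by (auto simp: nonzero_multiple_def intro: exI[of _ 1])
  then have "u \<notin># filter_mset (\<lambda>x. \<not> nonzero_multiple u x) W" by simp
  with assms(1) have "filter_mset (\<lambda>x. \<not> nonzero_multiple u x) W \<noteq> W" by (metis (no_types))
  then have "filter_mset (\<lambda>x. \<not> nonzero_multiple u x) W \<subset># W" by (simp add: subset_mset.less_le)
  then show ?thesis by (rule mset_subset_size)
qed

lemma hyperplane_through_element_if_lines_unbalanced:
  fixes W :: "'a::euclidean_space multiset"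
  assumes "dim (set_mset W) \<ge> 3" "\<And>u. u \<in># W \<Longrightarrow> u \<noteq> 0 \<Longrightarrow> line_imbalance u W \<noteq> 0"
  obtains a \<psi> where "a \<in># W" "a \<noteq> 0" "\<psi> \<bullet> a = 0" "sign_sum (\<lambda>x. \<psi> \<bullet> x) W \<noteq> 0"
proof -
  have "dim (set_mset W - {0}) = dim (set_mset W)"
    by (metis dim_span span_delete_0)
  with assms(1) have "dim (set_mset W - {0}) \<ge> 3" by simp
  then obtain a b where ab: "a \<in> set_mset W - {0}" "b \<in> set_mset W - {0}" "\<And>c. b \<noteq> c *\<^sub>R a"
      "\<And>x. x \<in> set_mset W - {0} \<Longrightarrow> x \<in> span {a, b} \<Longrightarrow> (\<exists>c. x = c *\<^sub>R a) \<or> (\<exists>c. x = c *\<^sub>R b)"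
    by (rule sylvester_gallai_vectors[rotated 2]) simp_all
  have "b \<notin> span {a}" using ab(3) by (auto simp: span_singleton)
  moreover have "(\<exists>c. x = c *\<^sub>R a) \<or> (\<exists>c. x = c *\<^sub>R b)" if "x \<in># W" "x \<in> span {a, b}" for x
    using ab(4)[of x] that by (cases "x = 0") (auto intro: exI[of _ 0])
  moreover have "line_imbalance b W \<noteq> 0" using assms(2) ab(2) by auto
  ultimately obtain \<psi> where "\<psi> \<bullet> a = 0" "sign_sum (\<lambda>x. \<psi> \<bullet> x) W \<noteq> 0"
    by (rule ordinary_line_unbalanced_hyperplane)
  with ab(1) that show ?thesis by auto
qed

text \<open>A balanced line can be deleted without changing any sign sum; either the rank stays at
  least 3 and induction applies, or the deleted line leaves the span of the rest.\<close>
lemma unbalanced_hyperplane_through_element: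
  fixes W :: "'a::euclidean_space multiset"
  assumes "unbalanced W" "dim (set_mset W) \<ge> 3"
  obtains w \<psi> where "w \<in># W" "w \<noteq> 0" "\<psi> \<bullet> w = 0" "sign_sum (\<lambda>x. \<psi> \<bullet> x) W \<noteq> 0"
proof -
  have "\<exists>w\<in>#W. w \<noteq> 0 \<and> (\<exists>\<psi>. \<psi> \<bullet> w = 0 \<and> sign_sum (\<lambda>x. \<psi> \<bullet> x) W \<noteq> 0)"
    using assms
  proof (induction "size W" arbitrary: W rule: less_induct)
    case less
    show ?case
    proof (cases "\<exists>u\<in>#W. u \<noteq> 0 \<and> line_imbalance u W = 0")
      case True
      then obtain u where u: "u \<in># W" "u \<noteq> 0" "line_imbalance u W = 0" by blast
      define W' where "W' = filter_mset (\<lambda>x. \<not> nonzero_multiple u x) W"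
      have same: "sign_sum (\<lambda>x. \<phi> \<bullet> x) W = sign_sum (\<lambda>x. \<phi> \<bullet> x) W'" for \<phi>
        unfolding W'_def using sign_sum_remove_balanced_line[OF u(2,3)] .
      then have "unbalanced W'" using less.prems(1) by (simp add: unbalanced_def)
      show ?thesis
      proof (cases "dim (set_mset W') \<ge> 3")
        case True
        have "size W' < size W"
          unfolding W'_def by (rule size_filter_not_nonzero_multiple_less[OF u(1,2)])
        from less.hyps[OF this \<open>unbalanced W'\<close> True] same show ?thesis
          by (auto simp: W'_def)
      next
        case False
        have "u \<notin> span (set_mset W')"
        proof
          assume u_span: "u \<in> span (set_mset W')"
          have "set_mset W \<subseteq> span (set_mset W')"
          proof
            fix x assume "x \<in> set_mset W"
            then show "x \<in> span (set_mset W')"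
              using u_span span_scale[OF u_span] by (cases "nonzero_multiple u x")
                (auto simp: W'_def nonzero_multiple_def intro: span_base)
          qed
          then have "dim (set_mset W) \<le> dim (set_mset W')" by (metis dim_span dim_subset)
          with False less.prems(2) show False by simp
        qed
        then obtain \<psi> where "\<psi> \<bullet> u = 0" "sign_sum (\<lambda>x. \<psi> \<bullet> x) W' \<noteq> 0"
          using unbalanced_hyperplane_through_vector \<open>unbalanced W'\<close> by blast
        with u same show ?thesis by metis
      qed
    next
      case False
      obtain a \<psi> where "a \<in># W" "a \<noteq> 0" "\<psi> \<bullet> a = 0" "sign_sum (\<lambda>x. \<psi> \<bullet> x) W \<noteq> 0"
        by (rule hyperplane_through_element_if_lines_unbalanced[OF less.prems(2)]) (use False in auto)
      then show ?thesis by blast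
    qed
  qed
  with that show ?thesis by blast
qed

definition proj_orth :: "'a::real_inner \<Rightarrow> 'a \<Rightarrow> 'a" where
  "proj_orth w x = x - ((x \<bullet> w) / (w \<bullet> w)) *\<^sub>R w"

lemma proj_orth_self [simp]: "proj_orth w w = 0"
  unfolding proj_orth_def by (cases "w = 0") simp_all

lemma inner_proj_orth_commute: "proj_orth w y \<bullet> x = y \<bullet> proj_orth w x"
  unfolding proj_orth_def by (simp add: inner_diff_left inner_diff_right inner_commute algebra_simps)

lemma inner_proj_orth_eq_0: "w \<noteq> 0 \<Longrightarrow> w \<bullet> proj_orth w x = 0"
  unfolding proj_orth_def by (simp add: inner_diff_right inner_commute)

lemma inner_proj_orth: "\<psi> \<bullet> w = 0 \<Longrightarrow> \<psi> \<bullet> proj_orth w x = \<psi> \<bullet> x"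
  unfolding proj_orth_def by (simp add: inner_diff_right)

lemma dim_proj_orth_image_less:
  fixes S :: "'a::euclidean_space set"
  assumes "w \<in> S" "w \<noteq> 0"
  shows "dim (proj_orth w ` S) + 1 \<le> dim S"
proof -
  have "insert w (proj_orth w ` S) \<subseteq> span S"
    using assms(1) by (auto simp: proj_orth_def intro: span_base span_diff span_scale)
  then have "dim (insert w (proj_orth w ` S)) \<le> dim S"
    using dim_subset by (metis dim_span)
  moreover have "w \<notin> span (proj_orth w ` S)"
  proof
    assume "w \<in> span (proj_orth w ` S)"
    then have "w \<bullet> w = 0"
      by (rule inner_span_eq_0) (auto simp: inner_proj_orth_eq_0[OF assms(2)])
    with assms(2) show False by simp
  qed
  ultimately show ?thesis by (simp add: dim_insert)
qed

lemma dim_le_dim_proj_orth_image: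
  fixes S :: "'a::euclidean_space set"
  shows "dim S \<le> dim (proj_orth w ` S) + 1"
proof -
  have "x \<in> span (insert w (proj_orth w ` S))" if "x \<in> S" for x
  proof -
    have "proj_orth w x + ((x \<bullet> w) / (w \<bullet> w)) *\<^sub>R w \<in> span (insert w (proj_orth w ` S))"
      using that by (intro span_add span_scale span_base) auto
    then show ?thesis by (simp add: proj_orth_def)
  qed
  then have "dim S \<le> dim (insert w (proj_orth w ` S))" by (metis dim_span dim_subset subsetI)
  also have "\<dots> \<le> dim (proj_orth w ` S) + 1" by (simp add: dim_insert)
  finally show ?thesis .
qed

text \<open>Projecting along the element w given by unbalanced_hyperplane_through_element lowers the
  rank and keeps the sign sums of all functionals orthogonal to w.\<close>
lemma unbalanced_hyperplane_corank_le_2: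
  fixes W :: "'a::euclidean_space multiset"
  assumes "unbalanced W"
  obtains \<psi> where "sign_sum (\<lambda>x. \<psi> \<bullet> x) W \<noteq> 0"
    "dim (set_mset W) \<le> dim (set_mset (filter_mset (\<lambda>x. \<psi> \<bullet> x = 0) W)) + 2"
proof -
  have "\<exists>\<psi>. sign_sum (\<lambda>x. \<psi> \<bullet> x) W \<noteq> 0 \<and>
      dim (set_mset W) \<le> dim (set_mset (filter_mset (\<lambda>x. \<psi> \<bullet> x = 0) W)) + 2"
    using assms
  proof (induction "dim (set_mset W)" arbitrary: W rule: less_induct)
    case less
    show ?case
    proof (cases "dim (set_mset W) \<ge> 3")
      case False
      with less.prems show ?thesis by (auto simp: unbalanced_def)
    next
      case True
      obtain w \<psi>0 where w: "w \<in># W" "w \<noteq> 0" "\<psi>0 \<bullet> w = 0" "sign_sum (\<lambda>x. \<psi>0 \<bullet> x) W \<noteq> 0"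
        using unbalanced_hyperplane_through_element[OF less.prems True] by blast
      define W' where "W' = image_mset (proj_orth w) W"
      have "sign_sum (\<lambda>x. \<psi>0 \<bullet> x) W' = sign_sum (\<lambda>x. \<psi>0 \<bullet> x) W"
        by (simp add: W'_def sign_sum_image_mset inner_proj_orth[OF w(3)])
      with w(4) have "unbalanced W'" unfolding unbalanced_def by metis
      moreover have "dim (set_mset W') < dim (set_mset W)"
        using dim_proj_orth_image_less[of w "set_mset W"] w(1,2) by (simp add: W'_def)
      ultimately obtain \<psi>1 where \<psi>1: "sign_sum (\<lambda>x. \<psi>1 \<bullet> x) W' \<noteq> 0"
          "dim (set_mset W') \<le> dim (set_mset (filter_mset (\<lambda>x. \<psi>1 \<bullet> x = 0) W')) + 2"
        using less.hyps by blast
      define \<psi> where "\<psi> = proj_orth w \<psi>1"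
      have \<psi>_eq: "\<psi> \<bullet> x = \<psi>1 \<bullet> proj_orth w x" for x by (simp add: \<psi>_def inner_proj_orth_commute)
      define K where "K = filter_mset (\<lambda>x. \<psi> \<bullet> x = 0) W"
      have "sign_sum (\<lambda>x. \<psi> \<bullet> x) W = sign_sum (\<lambda>x. \<psi>1 \<bullet> x) W'"
        by (simp add: W'_def sign_sum_image_mset \<psi>_eq)
      moreover have "proj_orth w ` set_mset K = set_mset (filter_mset (\<lambda>y. \<psi>1 \<bullet> y = 0) W')"
        by (auto simp: K_def W'_def \<psi>_eq)
      moreover have "w \<in># K" using w(1) by (simp add: K_def \<psi>_eq)
      then have "dim (proj_orth w ` set_mset K) + 1 \<le> dim (set_mset K)"
        using dim_proj_orth_image_less w(2) by blast
      moreover have "dim (set_mset W) \<le> dim (set_mset W') + 1"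
        using dim_le_dim_proj_orth_image[of "set_mset W" w] by (simp add: W'_def)
      ultimately show ?thesis using \<psi>1 by (intro exI[of _ \<psi>]) (auto simp: K_def)
    qed
  qed
  with that show ?thesis by blast
qed

section \<open>The rank of antipodal-free configurations\<close>

definition antipodal_free :: "'a::real_vector multiset \<Rightarrow> bool" where
  "antipodal_free V \<longleftrightarrow> (\<forall>x\<in>#V. \<forall>y\<in>#V. \<forall>c<0. y \<noteq> c *\<^sub>R x)"

definition antipodal_pair :: "'a::real_vector multiset \<Rightarrow> bool" where
  "antipodal_pair P \<longleftrightarrow> (\<exists>p c. p \<noteq> 0 \<and> c < 0 \<and> P = {#p, c *\<^sub>R p#})"

lemma antipodal_free_filter: "antipodal_free V \<Longrightarrow> antipodal_free (filter_mset P V)"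
  unfolding antipodal_free_def by auto

text \<open>For a generic hyperplane h through an element a, the kernel of h in V consists of
  positive multiples of a, on which the functional a is positive.\<close>
lemma antipodal_free_unbalanced:
  fixes V :: "'a::euclidean_space multiset"
  assumes "0 \<notin># V" "antipodal_free V" "V \<noteq> {#}"
  shows "unbalanced V"
proof (rule ccontr)
  assume "\<not> unbalanced V"
  then have balanced: "\<And>\<phi>. sign_sum (\<lambda>x. \<phi> \<bullet> x) V = 0" by (simp add: unbalanced_def)
  obtain a where a: "a \<in># V" using assms(3) by (meson multiset_nonemptyE)
  obtain h where h: "\<And>s. s \<in> {a} \<Longrightarrow> h \<bullet> s = 0" "\<And>x. x \<in> set_mset V \<Longrightarrow> x \<notin> span {a} \<Longrightarrow> h \<bullet> x \<noteq> 0"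
    using generic_orthogonal_vector[of "set_mset V" "{a}"] by blast
  let ?K = "filter_mset (\<lambda>x. h \<bullet> x = 0) V"
  have "a \<bullet> x > 0" if "x \<in># ?K" for x
  proof -
    have "x \<in> span {a}" using that h(2) by auto
    then obtain c where c: "x = c *\<^sub>R a" by (auto simp: span_singleton)
    have "c \<noteq> 0" "\<not> c < 0" using that c assms(1,2) a by (auto simp: antipodal_free_def)
    with c a assms(1) show ?thesis by (auto simp: zero_less_mult_iff)
  qed
  then have "sign_sum (\<lambda>x. a \<bullet> x) ?K = int (size ?K)" by (rule sign_sum_all_pos)
  moreover have "a \<in># ?K" using a h(1) by simp
  moreover have "sign_sum (\<lambda>x. a \<bullet> x) ?K = 0" by (rule sign_sum_kernel_eq_0[OF balanced])
  ultimately show False by auto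
qed

lemma vrank_kernel_less:
  fixes V :: "'n::finite vconf"
  assumes "sign_sum (\<lambda>x. \<psi> \<bullet> x) V \<noteq> 0"
  shows "vrank (filter_mset (\<lambda>x. \<psi> \<bullet> x = 0) V) < vrank V"
proof (rule ccontr)
  let ?K = "filter_mset (\<lambda>x. \<psi> \<bullet> x = 0) V"
  assume "\<not> ?thesis"
  then have "span (set_mset ?K) = span (set_mset V)"
    by (intro dim_eq_span) (auto simp: vrank_def)
  then have "\<psi> \<bullet> x = 0" if "x \<in># V" for x
    using that by (intro inner_span_eq_0[of x "set_mset ?K"]) (auto intro: span_base)
  then have "sign_sum (\<lambda>x. \<psi> \<bullet> x) V = 0" by (rule sign_sum_all_zero)
  with assms show False by contradiction
qed

text \<open>The rank drops by at most 2 when passing to the kernel of the hyperplane, while DD drops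
  by at least 1.\<close>
lemma vrank_le_2_DD:
  fixes V :: "'n::finite vconf"
  assumes "0 \<notin># V" "antipodal_free V"
  shows "int (vrank V) \<le> 2 * DD V"
  using assms
proof (induction "vrank V" arbitrary: V rule: less_induct)
  case less
  show ?case
  proof (cases "V = {#}")
    case True
    then show ?thesis by (simp add: vrank_def)
  next
    case False
    obtain \<psi> where \<psi>: "sign_sum (\<lambda>x. \<psi> \<bullet> x) V \<noteq> 0"
        "dim (set_mset V) \<le> dim (set_mset (filter_mset (\<lambda>x. \<psi> \<bullet> x = 0) V)) + 2"
      using unbalanced_hyperplane_corank_le_2 antipodal_free_unbalanced[OF less.prems False] by blast
    define K where "K = filter_mset (\<lambda>x. \<psi> \<bullet> x = 0) V"
    obtain \<psi>' where \<psi>': "sign_sum (\<lambda>x. \<psi>' \<bullet> x) V \<ge> 1" "filter_mset (\<lambda>x. \<psi>' \<bullet> x = 0) V = K"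
    proof (cases "sign_sum (\<lambda>x. \<psi> \<bullet> x) V > 0")
      case True
      then show ?thesis by (intro that[of \<psi>]) (simp_all add: K_def)
    next
      case False
      with \<psi>(1) that[of "- \<psi>"] show ?thesis
        using sign_sum_uminus[of "\<lambda>x. \<psi> \<bullet> x" V] by (simp add: K_def)
    qed
    have "vrank K < vrank V" unfolding K_def by (rule vrank_kernel_less[OF \<psi>(1)])
    then have "int (vrank K) \<le> 2 * DD K"
      using less.hyps less.prems by (simp add: K_def antipodal_free_filter)
    moreover have "sign_sum (\<lambda>x. \<psi>' \<bullet> x) V + DD K \<le> DD V"
      using sign_sum_add_DD_kernel_le_DD[OF linear_inner_right, of \<psi>' V] \<psi>'(2) by simp
    ultimately show ?thesis using \<psi>(2) \<psi>'(1) by (simp add: vrank_def K_def)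
  qed
qed

section \<open>Antipodal pairs\<close>

lemma exists_antipodal_pair:
  assumes "0 \<notin># V" "\<not> antipodal_free V"
  obtains P where "antipodal_pair P" "P \<subseteq># V"
proof -
  obtain x y c where xy: "x \<in># V" "y \<in># V" "c < 0" "y = c *\<^sub>R x"
    using assms(2) unfolding antipodal_free_def by blast
  have x: "x \<noteq> 0" using xy(1) assms(1) by auto
  have "y \<noteq> x"
  proof
    assume "y = x"
    then have "(1 - c) *\<^sub>R x = 0" using xy(4) by (simp add: algebra_simps)
    with x xy(3) show False by simp
  qed
  with xy have "{#x, y#} \<subseteq># V" by (simp add: insert_subset_eq_iff in_diff_count)
  moreover have "antipodal_pair {#x, y#}" unfolding antipodal_pair_def using x xy(3,4) by blast
  ultimately show ?thesis using that by blast
qed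

lemma antipodal_decomposition:
  assumes "0 \<notin># V"
  obtains R ps where "V = R + sum_list ps" "\<And>P. P \<in> set ps \<Longrightarrow> antipodal_pair P" "antipodal_free R"
proof -
  have "\<exists>R ps. V = R + sum_list ps \<and> (\<forall>P\<in>set ps. antipodal_pair P) \<and> antipodal_free R"
    using assms
  proof (induction "size V" arbitrary: V rule: less_induct)
    case less
    show ?case
    proof (cases "antipodal_free V")
      case True
      then show ?thesis by (intro exI[of _ V] exI[of _ "[]"]) simp
    next
      case False
      then obtain P where P: "antipodal_pair P" "P \<subseteq># V"
        using exists_antipodal_pair less.prems by blast
      then have V: "V = P + (V - P)" by (simp add: subset_mset.add_diff_inverse)
      moreover have "size (V - P) < size V" using P(1) by (subst V) (auto simp: antipodal_pair_def)
      moreover have "0 \<notin># V - P" using less.prems by (meson in_diffD)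
      ultimately obtain R ps where "V - P = R + sum_list ps" "\<forall>P\<in>set ps. antipodal_pair P" "antipodal_free R"
        using less.hyps by blast
      with P(1) V show ?thesis by (intro exI[of _ R] exI[of _ "P # ps"]) (simp add: algebra_simps)
    qed
  qed
  with that show ?thesis by blast
qed

lemma sign_sum_antipodal_pair:
  assumes "linear f" "antipodal_pair P"
  shows "sign_sum f P = 0"
proof -
  obtain p c where P: "c < 0" "P = {#p, c *\<^sub>R p#}" using assms(2) antipodal_pair_def by blast
  have "f (c *\<^sub>R p) = c * f p" using linear_cmul[OF assms(1)] by simp
  with P show ?thesis by (simp add: sgn_int_mult) (simp add: sgn_int_def)
qed

lemma sign_sum_antipodal_pairs:
  assumes "linear f" "\<And>P. P \<in> set ps \<Longrightarrow> antipodal_pair P"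
  shows "sign_sum f (sum_list ps) = 0"
  using assms(2) by (induction ps) (auto simp: sign_sum_antipodal_pair[OF assms(1)])

lemma zero_not_in_antipodal_pair: "antipodal_pair P \<Longrightarrow> 0 \<notin># P"
  by (auto simp: antipodal_pair_def)

lemma zero_not_in_antipodal_pairs:
  "(\<And>P. P \<in> set ps \<Longrightarrow> antipodal_pair P) \<Longrightarrow> 0 \<notin># sum_list ps"
proof (induction ps)
  case (Cons P ps)
  then show ?case using zero_not_in_antipodal_pair[of P] by auto
qed simp

lemma nclosedneg_antipodal_pair:
  assumes "linear g" "antipodal_pair P" "\<And>x. x \<in># P \<Longrightarrow> g x \<noteq> 0"
  shows "nclosedneg g P = 1"
proof -
  obtain p c where P: "c < 0" "P = {#p, c *\<^sub>R p#}" using assms(2) antipodal_pair_def by blast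
  have "g (c *\<^sub>R p) = c * g p" using linear_cmul[OF assms(1)] by simp
  moreover have "g p \<noteq> 0" using assms(3) P(2) by simp
  ultimately show ?thesis using P by (auto simp: nclosedneg_def mult_le_0_iff)
qed

lemma nclosedneg_antipodal_pairs:
  assumes "linear g" "\<And>P. P \<in> set ps \<Longrightarrow> antipodal_pair P" "\<And>x. x \<in># sum_list ps \<Longrightarrow> g x \<noteq> 0"
  shows "nclosedneg g (sum_list ps) = length ps"
  using assms(2,3)
proof (induction ps)
  case (Cons P ps)
  have "nclosedneg g P = 1"
    by (rule nclosedneg_antipodal_pair[OF assms(1)]) (use Cons.prems in auto)
  moreover have "nclosedneg g (sum_list ps) = length ps"
    by (rule Cons.IH) (use Cons.prems in auto)
  ultimately show ?case by simp
qed (simp add: nclosedneg_def)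

lemma codeg_star_antipodal_pair:
  assumes "antipodal_pair P"
  shows "codeg_star P = 1"
proof -
  obtain p c where P: "p \<noteq> 0" "c < 0" "P = {#p, c *\<^sub>R p#}" using assms antipodal_pair_def by blast
  have "codeg_star P \<le> nclosedneg (\<lambda>x. p \<bullet> x) P"
    by (rule codeg_star_le[OF inner_mem_nonzero_functionals[OF P(1)]])
  also have "\<dots> = 1"
    by (rule nclosedneg_antipodal_pair[OF linear_inner_right assms]) (use P in auto)
  finally have "codeg_star P \<le> 1" .
  moreover obtain f where f: "f \<in> nonzero_functionals" "codeg_star P = nclosedneg f P"
    using codeg_star_attained by blast
  moreover have "linear f" using f(1) by (simp add: nonzero_functionals_def)
  then have "f (c *\<^sub>R p) = c * f p" using linear_cmul[of f] by simp
  then have "nclosedneg f P \<ge> 1" using P(2,3) by (auto simp: nclosedneg_def mult_le_0_iff)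
  ultimately show ?thesis by simp
qed

lemma sum_list_codeg_star_antipodal_pairs:
  "(\<And>P. P \<in> set ps \<Longrightarrow> antipodal_pair P) \<Longrightarrow> sum_list (map codeg_star ps) = length ps"
  by (induction ps) (auto simp: codeg_star_antipodal_pair)

lemma codeg_star_add_antipodal_pairs_ge:
  assumes "\<And>P. P \<in> set ps \<Longrightarrow> antipodal_pair P"
  shows "codeg_star R + length ps \<le> codeg_star (R + sum_list ps)"
  using assms
proof (induction ps)
  case (Cons P ps)
  have "codeg_star P = 1" using Cons.prems by (simp add: codeg_star_antipodal_pair)
  moreover have "codeg_star R + length ps \<le> codeg_star (R + sum_list ps)"
    using Cons.prems by (intro Cons.IH) simp
  ultimately have "codeg_star R + length (P # ps) \<le> codeg_star (R + sum_list ps) + codeg_star P"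
    by simp
  also have "\<dots> \<le> codeg_star (R + sum_list ps + P)"
    by (rule codeg_star_superadditive)
  also have "R + sum_list ps + P = R + sum_list (P # ps)"
    by (simp add: add_ac)
  finally show ?case .
qed simp

text \<open>A generic refinement of a hyperplane attaining codeg* of R puts exactly one vector of
  each antipodal pair on its closed negative side.\<close>
lemma codeg_star_add_antipodal_pairs_le:
  fixes R :: "'n::finite vconf"
  assumes "\<And>P. P \<in> set ps \<Longrightarrow> antipodal_pair P" "0 \<notin># R" "R + sum_list ps \<noteq> {#}"
  shows "codeg_star (R + sum_list ps) \<le> codeg_star R + length ps"
proof -
  define V where "V = R + sum_list ps"
  have "0 \<notin># sum_list ps" by (rule zero_not_in_antipodal_pairs[OF assms(1)])
  with assms(2) have V0: "0 \<notin># V" by (simp add: V_def)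
  obtain f where f: "f \<in> nonzero_functionals" "codeg_star R = nclosedneg f R"
    using codeg_star_attained by blast
  then have "linear f" by (simp add: nonzero_functionals_def)
  then obtain g :: "real^'n \<Rightarrow> real" where g: "linear g" "\<And>x. x \<in># V \<Longrightarrow> g x \<noteq> 0"
      "\<And>x. x \<in># V \<Longrightarrow> f x > 0 \<Longrightarrow> g x > 0"
    using generic_refinement[OF _ V0] by metis
  obtain x0 where "x0 \<in># V" using assms(3) unfolding V_def by (meson multiset_nonemptyE)
  then have "g \<in> nonzero_functionals" using mem_nonzero_functionalsI g(1,2) by blast
  then have "codeg_star V \<le> nclosedneg g R + nclosedneg g (sum_list ps)"
    using codeg_star_le[of g V] by (simp add: V_def)
  moreover have "nclosedneg g R \<le> nclosedneg f R"
  proof -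
    have "f x \<le> 0" if "x \<in># R" "g x \<le> 0" for x
      using g(3)[of x] that by (fastforce simp: V_def)
    then show ?thesis
      unfolding nclosedneg_def by (intro size_mset_mono filter_mset_mono_strong) auto
  qed
  moreover have "nclosedneg g (sum_list ps) = length ps"
    by (rule nclosedneg_antipodal_pairs[OF g(1) assms(1)]) (use g(2) in \<open>auto simp: V_def\<close>)
  ultimately show ?thesis using f(2) by (simp add: V_def)
qed

lemma codeg_star_add_antipodal_pairs:
  fixes R :: "'n::finite vconf"
  assumes "\<And>P. P \<in> set ps \<Longrightarrow> antipodal_pair P" "0 \<notin># R"
  shows "codeg_star (R + sum_list ps) = codeg_star R + length ps"
proof (cases "R + sum_list ps = {#}")
  case True
  have "ps = []"
  proof (cases ps)
    case (Cons P ps')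
    then have "antipodal_pair P" using assms(1) by simp
    with True Cons show ?thesis by (auto simp: antipodal_pair_def)
  qed
  with True show ?thesis by simp
next
  case False
  with assms show ?thesis
    using codeg_star_add_antipodal_pairs_ge codeg_star_add_antipodal_pairs_le by (metis antisym)
qed

lemma vrank_add_antipodal_pair:
  assumes "antipodal_pair P"
  shows "vrank (A + P) \<le> vrank A + 1"
proof -
  obtain p c where P: "P = {#p, c *\<^sub>R p#}" using assms antipodal_pair_def by blast
  have "c *\<^sub>R p \<in> span (insert p (set_mset A))" by (intro span_scale span_base) simp
  moreover have "set_mset (A + P) = insert (c *\<^sub>R p) (insert p (set_mset A))" by (auto simp: P)
  ultimately have "span (set_mset (A + P)) = span (insert p (set_mset A))"
    using span_redundant by simp
  then have "vrank (A + P) = dim (insert p (set_mset A))"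
    unfolding vrank_def by (metis dim_span)
  then show ?thesis by (simp add: vrank_def dim_insert)
qed

lemma vrank_add_antipodal_pairs:
  "(\<And>P. P \<in> set ps \<Longrightarrow> antipodal_pair P) \<Longrightarrow> vrank (R + sum_list ps) \<le> vrank R + length ps"
proof (induction ps)
  case (Cons P ps)
  then have "vrank ((R + sum_list ps) + P) \<le> vrank R + length ps + 1"
    using vrank_add_antipodal_pair[of P "R + sum_list ps"] by fastforce
  then show ?case by (simp add: algebra_simps)
qed simp

lemma card_set_mset_le_size: "card (set_mset M) \<le> size M"
  by (induction M) (auto simp: card_insert_if)

lemma vrank_le_size: "vrank R \<le> size R"
proof -
  have "dim (set_mset R) \<le> card (set_mset R)" by (rule dim_le_card) (auto intro: span_base)
  then show ?thesis unfolding vrank_def using card_set_mset_le_size[of R] by simp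
qed

lemma size_le_DD_if_codeg_star_eq_0:
  assumes "codeg_star R = 0"
  shows "int (size R) \<le> DD R"
proof -
  obtain f where f: "f \<in> nonzero_functionals" "nclosedneg f R = 0"
    using codeg_star_attained assms by metis
  then have "f x > 0" if "x \<in># R" for x
    using that by (auto simp: nclosedneg_def filter_mset_eq_mempty_iff)
  then have "sign_sum f R = int (size R)" by (rule sign_sum_all_pos)
  moreover have "linear f" using f(1) by (simp add: nonzero_functionals_def)
  ultimately show ?thesis using sign_sum_le_DD by metis
qed

theorem codeg_star_decomposition:
  fixes V :: "'n::finite vconf"
  assumes "0 \<notin># V" "DD V > 0"
  obtains V0 Vs where "codeg_star_decomp V V0 Vs" "int (length Vs) \<ge> int (vrank V) + 1 - 2 * DD V"
proof -
  obtain R ps where R: "V = R + sum_list ps" "\<And>P. P \<in> set ps \<Longrightarrow> antipodal_pair P" "antipodal_free R"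
    using antipodal_decomposition[OF assms(1)] by blast
  have R0: "0 \<notin># R" using assms(1) R(1) by simp
  have DD_R: "DD V = DD R"
    unfolding R(1) by (rule DD_cong) (simp add: sign_sum_antipodal_pairs[OF _ R(2)])
  have rank: "vrank V \<le> vrank R + length ps"
    unfolding R(1) by (rule vrank_add_antipodal_pairs[OF R(2)])
  have codeg: "codeg_star V = codeg_star R + length ps"
    unfolding R(1) by (rule codeg_star_add_antipodal_pairs[OF R(2) R0])
  have pairs: "sum_list (map codeg_star ps) = length ps" "\<forall>P\<in>set ps. codeg_star P \<ge> 1"
    using sum_list_codeg_star_antipodal_pairs[OF R(2)] codeg_star_antipodal_pair[OF R(2)] by auto
  have rank_R: "int (vrank R) \<le> 2 * DD R" by (rule vrank_le_2_DD[OF R0 R(3)])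
  show ?thesis
  proof (cases "codeg_star R = 0")
    case False
    then have "codeg_star_decomp V {#} (R # ps)"
      using R(1) codeg pairs by (simp add: codeg_star_decomp_def)
    with that show ?thesis using rank rank_R DD_R by simp
  next
    case True
    then have "codeg_star_decomp V R ps"
      using R(1) codeg pairs by (simp add: codeg_star_decomp_def)
    moreover have "int (vrank R) + 1 \<le> 2 * DD R"
      using size_le_DD_if_codeg_star_eq_0[OF True] vrank_le_size[of R] assms(2) DD_R by linarith
    ultimately show ?thesis using that rank DD_R by simp
  qed
qed

theorem mainTheorem1:
  fixes V :: "(real^'n::finite) multiset"
  assumes "0 \<notin># V"
    and "DD V > 0"
  shows "(let r = int (vrank V); \<delta> = deg_star V; d = int (size V) - r - 1 in
           r + 1 - 2 * DD V = 2 * (d + 1 - 2 * \<delta>) - r + 1 \<and>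
           2 * (d + 1 - 2 * \<delta>) - r + 1 = 3 * d + 4 - 4 * \<delta> - int (size V) \<and>
           (\<exists>V0 Vs. codeg_star_decomp V V0 Vs \<and> int (length Vs) \<ge> r + 1 - 2 * DD V))"
proof -
  have "V \<noteq> {#}" using assms(2) by auto
  then have "DD V = 2 * int (max_npos V) - int (size V)"
    by (rule DD_eq_max_npos[OF assms(1)])
  moreover obtain V0 Vs where "codeg_star_decomp V V0 Vs" "int (length Vs) \<ge> int (vrank V) + 1 - 2 * DD V"
    using codeg_star_decomposition[OF assms] .
  ultimately show ?thesis by (auto simp: Let_def deg_star_eq algebra_simps)
qed

end
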